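(* In the commutative toric non-degenerate setting described in the context, the automorphism group of $\bar\Gamma$ lifts via the gauging action to automorphisms of the torus: for every automorphism $\phi$ of $\bar\Gamma$ there is a unique $*$-automorphism $\psi_\phi$ of $C(T^n)$ with $\psi_\phi(wt(f))=wt'_\phi(\phi(f))$ for all oriented edges $f$; it is of the form $\psi_\phi(F)=F\circ h_\phi$ for a homeomorphism $h_\phi$ of $T^n$, and $\phi\mapsto\psi_\phi$ is a group homomorphism from $\mathrm{Aut}(\bar\Gamma)$ to the group of $*$-automorphisms of $C(T^n)$. Moreover, if $t\in T^n$ satisfies $h_\phi(t)=t$, then the re-gauging is an enhanced symmetry of the corresponding Hamiltonian: the matrix $M_\phi(t)$ commutes with $H_{\boldsymbol\tau}(t)$.
   Context: $\bar\Gamma$ is a finite connected graph (multiple edges and loops allowed) with $k$ vertices and $n=|E(\bar\Gamma)|-k+1$ independent cycles; $\bar f$ is the reverse of an oriented edge $f$. An automorphism of $\bar\Gamma$ is a pair of bijections of vertices and edges preserving incidence; it acts on oriented edges. Fix an ordered rooted spanning tree $\boldsymbol\tau=(\tau,r,<)$: a spanning tree $\tau$, root $r$, and vertex order $u_1<\dots<u_k$ with $u_1=r$. For a spanning tree $\sigma$ and vertices $x,y$, $\sigma[x\to y]$ is the unique non-backtracking path in $\sigma$ from $x$ to $y$. Let $T^n=(S^1)^n$ with coordinate functions $z_1,\dots,z_n\in C(T^n)$. Choose an orientation $e_1,\dots,e_n$ of the edges not in $\tau$ and define $wt$ on oriented edges by $wt(f)=1$ if $f$ lies in $\tau$, $wt(e_j)=z_j$,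 $wt(\bar e_j)=\bar z_j$. For a walk $\gamma$ through $f_1,\dots,f_m$, $wt(\gamma)=\prod_j wt(f_j)$. The matrix Hamiltonian $H_{\boldsymbol\tau}\in M_k(C(T^n))$ has entries $(H_{\boldsymbol\tau})_{ij}=\sum_{f\text{ from }u_j\text{ to }u_i}wt(f)$; $H_{\boldsymbol\tau}(t)\in M_k(\mathbb C)$ is its evaluation at $t\in T^n$. For an automorphism $\phi$ let $\tau'=\phi(\tau)$ with root $r'=\phi(r)$ and pushed-forward order $u'_i=\phi(u_i)$. The re-gauged weight is $wt'_\phi(f):=wt(\tau'[r'\to x],\,f,\,\tau'[y\to r'])$ for $f$ from $x$ to $y$. The re-gauging matrix $M_\phi\in M_k(C(T^n))$ is defined by $M_\phi e_i=\overline{c_i}\,e_{s(i)}$, where $s(i)$ is the index with $\phi(u_{s(i)})=u_i$ and $c_i=wt(\tau[r\to r'],\,\tau'[r'\to u_i],\,\tau[u_i\to r])$; $M_\phi(t)$ is its evaluation at $t$. *)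

theory Defs
  imports "HOL-Analysis.Analysis"
begin

text \<open>A graph is given by a vertex set V, an edge set E and a map ends assigning
  to every (undirected) edge its two endpoints in a reference orientation.
  Oriented edges are pairs (e, b): (e, True) is e in its reference orientation,
  (e, False) is its reverse.\<close>

definition osrc :: "('e \<Rightarrow> 'v \<times> 'v) \<Rightarrow> 'e \<times> bool \<Rightarrow> 'v" where
  "osrc ends f = (if snd f then fst (ends (fst f)) else snd (ends (fst f)))"

definition otgt :: "('e \<Rightarrow> 'v \<times> 'v) \<Rightarrow> 'e \<times> bool \<Rightarrow> 'v" where
  "otgt ends f = (if snd f then snd (ends (fst f)) else fst (ends (fst f)))"

definition orev :: "'e \<times> bool \<Rightarrow> 'e \<times> bool" where
  "orev f = (fst f, \<not> snd f)"

definition oedges :: "'e set \<Rightarrow> ('e \<times> bool) set" where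
  "oedges E = E \<times> UNIV"

fun is_walk :: "('e \<Rightarrow> 'v \<times> 'v) \<Rightarrow> 'e set \<Rightarrow> 'v \<Rightarrow> 'v \<Rightarrow> ('e \<times> bool) list \<Rightarrow> bool" where
  "is_walk ends T x y [] \<longleftrightarrow> x = y"
| "is_walk ends T x y (f # p) \<longleftrightarrow>
     fst f \<in> T \<and> osrc ends f = x \<and> is_walk ends T (otgt ends f) y p"

definition non_backtracking :: "('e \<times> bool) list \<Rightarrow> bool" where
  "non_backtracking p \<longleftrightarrow> (\<forall>i. Suc i < length p \<longrightarrow> p ! Suc i \<noteq> orev (p ! i))"

definition finite_graph :: "'v set \<Rightarrow> 'e set \<Rightarrow> ('e \<Rightarrow> 'v \<times> 'v) \<Rightarrow> bool" where
  "finite_graph V E ends \<longleftrightarrow> finite V \<and> finite E \<and>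
     (\<forall>e\<in>E. fst (ends e) \<in> V \<and> snd (ends e) \<in> V)"

definition connected_graph :: "'v set \<Rightarrow> 'e set \<Rightarrow> ('e \<Rightarrow> 'v \<times> 'v) \<Rightarrow> bool" where
  "connected_graph V E ends \<longleftrightarrow> finite_graph V E ends \<and> V \<noteq> {} \<and>
     (\<forall>x\<in>V. \<forall>y\<in>V. \<exists>p. is_walk ends E x y p)"

definition spanning_tree :: "'v set \<Rightarrow> 'e set \<Rightarrow> ('e \<Rightarrow> 'v \<times> 'v) \<Rightarrow> 'e set \<Rightarrow> bool" where
  "spanning_tree V E ends T \<longleftrightarrow> T \<subseteq> E \<and>
     (\<forall>x\<in>V. \<forall>y\<in>V. \<exists>p. is_walk ends T x y p) \<and>
     \<not> (\<exists>x p. p \<noteq> [] \<and> is_walk ends T x x p \<and> non_backtracking p)"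

definition tree_path :: "('e \<Rightarrow> 'v \<times> 'v) \<Rightarrow> 'e set \<Rightarrow> 'v \<Rightarrow> 'v \<Rightarrow> ('e \<times> bool) list" where
  "tree_path ends T x y = (THE p. is_walk ends T x y p \<and> non_backtracking p)"

definition graph_aut ::
  "'v set \<Rightarrow> 'e set \<Rightarrow> ('e \<Rightarrow> 'v \<times> 'v) \<Rightarrow> ('v \<Rightarrow> 'v) \<times> ('e \<times> bool \<Rightarrow> 'e \<times> bool) \<Rightarrow> bool" where
  "graph_aut V E ends \<phi> \<longleftrightarrow>
     bij_betw (fst \<phi>) V V \<and> bij_betw (snd \<phi>) (oedges E) (oedges E) \<and>
     (\<forall>f\<in>oedges E. snd \<phi> (orev f) = orev (snd \<phi> f) \<and>
        osrc ends (snd \<phi> f) = fst \<phi> (osrc ends f) \<and>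
        otgt ends (snd \<phi> f) = fst \<phi> (otgt ends f))"

definition aut_comp ::
  "('v \<Rightarrow> 'v) \<times> ('e \<times> bool \<Rightarrow> 'e \<times> bool) \<Rightarrow> ('v \<Rightarrow> 'v) \<times> ('e \<times> bool \<Rightarrow> 'e \<times> bool)
   \<Rightarrow> ('v \<Rightarrow> 'v) \<times> ('e \<times> bool \<Rightarrow> 'e \<times> bool)" where
  "aut_comp \<phi>1 \<phi>2 = (fst \<phi>1 \<circ> fst \<phi>2, snd \<phi>1 \<circ> snd \<phi>2)"

definition tree_image :: "('e \<times> bool \<Rightarrow> 'e \<times> bool) \<Rightarrow> 'e set \<Rightarrow> 'e set" where
  "tree_image pe T = {fst (pe (e, True)) | e. e \<in> T}"

text \<open>T^n, with coordinates indexed by the n edges not in the tree T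
  (coordinate z_e = t e); other coordinates are fixed to 1.\<close>
definition torus :: "'e set \<Rightarrow> 'e set \<Rightarrow> ('e \<Rightarrow> complex) set" where
  "torus E T = {t. \<forall>e. (e \<in> E - T \<longrightarrow> cmod (t e) = 1) \<and> (e \<notin> E - T \<longrightarrow> t e = 1)}"

text \<open>C(S), represented by continuous functions on S that vanish outside S.\<close>
definition Cfun :: "('e \<Rightarrow> complex) set \<Rightarrow> (('e \<Rightarrow> complex) \<Rightarrow> complex) set" where
  "Cfun S = {F. continuous_on S F \<and> (\<forall>t. t \<notin> S \<longrightarrow> F t = 0)}"

definition as_el :: "('e \<Rightarrow> complex) set \<Rightarrow> (('e \<Rightarrow> complex) \<Rightarrow> complex) \<Rightarrow> ('e \<Rightarrow> complex) \<Rightarrow> complex" where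
  "as_el S g = (\<lambda>t. if t \<in> S then g t else 0)"

definition star_aut ::
  "('e \<Rightarrow> complex) set \<Rightarrow> ((('e \<Rightarrow> complex) \<Rightarrow> complex) \<Rightarrow> (('e \<Rightarrow> complex) \<Rightarrow> complex)) \<Rightarrow> bool" where
  "star_aut S \<psi> \<longleftrightarrow> bij_betw \<psi> (Cfun S) (Cfun S) \<and>
     (\<forall>F\<in>Cfun S. \<forall>G\<in>Cfun S.
        \<psi> (\<lambda>t. F t + G t) = (\<lambda>t. \<psi> F t + \<psi> G t) \<and>
        \<psi> (\<lambda>t. F t * G t) = (\<lambda>t. \<psi> F t * \<psi> G t)) \<and>
     (\<forall>c. \<forall>F\<in>Cfun S. \<psi> (\<lambda>t. c * F t) = (\<lambda>t. c * \<psi> F t)) \<and>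
     (\<forall>F\<in>Cfun S. \<psi> (\<lambda>t. cnj (F t)) = (\<lambda>t. cnj (\<psi> F t))) \<and>
     \<psi> (as_el S (\<lambda>t. 1)) = as_el S (\<lambda>t. 1)"

definition wt_edge :: "'e set \<Rightarrow> 'e \<times> bool \<Rightarrow> ('e \<Rightarrow> complex) \<Rightarrow> complex" where
  "wt_edge T f t = (if fst f \<in> T then 1 else if snd f then t (fst f) else cnj (t (fst f)))"

definition wt_walk :: "'e set \<Rightarrow> ('e \<times> bool) list \<Rightarrow> ('e \<Rightarrow> complex) \<Rightarrow> complex" where
  "wt_walk T p t = prod_list (map (\<lambda>f. wt_edge T f t) p)"

definition regauged_wt ::
  "('e \<Rightarrow> 'v \<times> 'v) \<Rightarrow> 'e set \<Rightarrow> 'v \<Rightarrow> ('v \<Rightarrow> 'v) \<times> ('e \<times> bool \<Rightarrow> 'e \<times> bool)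
    \<Rightarrow> 'e \<times> bool \<Rightarrow> ('e \<Rightarrow> complex) \<Rightarrow> complex" where
  "regauged_wt ends T r \<phi> f =
     (let T' = tree_image (snd \<phi>) T; r' = fst \<phi> r in
      wt_walk T (tree_path ends T' r' (osrc ends f) @ [f] @ tree_path ends T' (otgt ends f) r'))"

text \<open>H(t)_{ij} = sum of wt(f) over oriented edges f from u_j to u_i (indices 0-based, u_i = us!i).\<close>
definition hamiltonian ::
  "'e set \<Rightarrow> ('e \<Rightarrow> 'v \<times> 'v) \<Rightarrow> 'e set \<Rightarrow> 'v list \<Rightarrow> ('e \<Rightarrow> complex) \<Rightarrow> nat \<Rightarrow> nat \<Rightarrow> complex" where
  "hamiltonian E ends T us t i j =
     (\<Sum>f\<in>{f\<in>oedges E. osrc ends f = us ! j \<and> otgt ends f = us ! i}. wt_edge T f t)"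

text \<open>M_phi(t) e_b = conj(c_b) e_{s(b)} with phi(u_{s(b)}) = u_b, and
  c_b = wt(tau[r -> r'], tau'[r' -> u_b], tau[u_b -> r]).\<close>
definition regauge_matrix ::
  "('e \<Rightarrow> 'v \<times> 'v) \<Rightarrow> 'e set \<Rightarrow> 'v list \<Rightarrow> ('v \<Rightarrow> 'v) \<times> ('e \<times> bool \<Rightarrow> 'e \<times> bool)
    \<Rightarrow> ('e \<Rightarrow> complex) \<Rightarrow> nat \<Rightarrow> nat \<Rightarrow> complex" where
  "regauge_matrix ends T us \<phi> t a b =
     (let r = hd us; r' = fst \<phi> r; T' = tree_image (snd \<phi>) T;
          c = wt_walk T (tree_path ends T r r' @ tree_path ends T' r' (us ! b)
                           @ tree_path ends T (us ! b) r) t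
      in if fst \<phi> (us ! a) = us ! b then cnj c else 0)"

definition mat_commute :: "nat \<Rightarrow> (nat \<Rightarrow> nat \<Rightarrow> complex) \<Rightarrow> (nat \<Rightarrow> nat \<Rightarrow> complex) \<Rightarrow> bool" where
  "mat_commute k A B \<longleftrightarrow>
     (\<forall>i<k. \<forall>j<k. (\<Sum>l<k. A i l * B l j) = (\<Sum>l<k. B i l * A l j))"

end

theory Submission
  imports Defs
begin

text \<open>The weights of the positively oriented edges outside the tree are the coordinate
  functions of the torus, so the prescribed images determine h_phi coordinatewise. Writing
  c(v) for the weight of the path from r' to v in phi(tau), one has
  wt'_phi(f) = c(src f) wt(f) conj(c(tgt f)); as these gauge factors have modulus 1 they telescope
  along walks, and since closed walks in a tree have weight 1 this gives
  wt(f) o h_phi = wt'_phi(phi f) for every oriented edge, the cocycle identity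
  h_(phi1 phi2) = h_phi2 o h_phi1 and h_id = id. Hence h_phi is a homeomorphism and F \<mapsto> F o h_phi
  a group homomorphism into the *-automorphisms. Uniqueness holds because a *-automorphism
  followed by evaluation at a point is a character of C(T^n), hence an evaluation. At a fixed point
  of h_phi the gauge relation says exactly that M_phi(t), a permutation matrix weighted by the
  conj(c(u_i)), intertwines H(t) with itself.\<close>

section \<open>Walks\<close>

lemma orev_orev [simp]: "orev (orev f) = f"
  by (simp add: orev_def)

lemma fst_orev [simp]: "fst (orev f) = fst f"
  by (simp add: orev_def)

lemma osrc_orev [simp]: "osrc ends (orev f) = otgt ends f"
  by (simp add: orev_def osrc_def otgt_def)

lemma otgt_orev [simp]: "otgt ends (orev f) = osrc ends f"
  by (simp add: orev_def osrc_def otgt_def)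

lemma orev_eq_iff: "orev f = g \<longleftrightarrow> f = orev g"
  by (auto simp: orev_def)

lemma oedges_iff: "f \<in> oedges E \<longleftrightarrow> fst f \<in> E"
  by (cases f) (auto simp: oedges_def)

definition rev_walk :: "('e \<times> bool) list \<Rightarrow> ('e \<times> bool) list" where
  "rev_walk p = rev (map orev p)"

lemma rev_walk_Nil [simp]: "rev_walk [] = []"
  by (simp add: rev_walk_def)

lemma rev_walk_Cons [simp]: "rev_walk (f # p) = rev_walk p @ [orev f]"
  by (simp add: rev_walk_def)

lemma rev_walk_append [simp]: "rev_walk (p @ q) = rev_walk q @ rev_walk p"
  by (simp add: rev_walk_def)

lemma rev_walk_eq_Nil_iff [simp]: "rev_walk p = [] \<longleftrightarrow> p = []"
  by (simp add: rev_walk_def)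

lemma last_rev_walk: "p \<noteq> [] \<Longrightarrow> last (rev_walk p) = orev (hd p)"
  by (cases p) auto

lemma is_walk_append:
  "is_walk ends T x y (p @ q) \<longleftrightarrow> (\<exists>z. is_walk ends T x z p \<and> is_walk ends T z y q)"
  by (induction p arbitrary: x) auto

lemma is_walk_snoc:
  "is_walk ends T x y (p @ [f]) \<longleftrightarrow> is_walk ends T x (osrc ends f) p \<and> fst f \<in> T \<and> otgt ends f = y"
  by (auto simp: is_walk_append)

lemma is_walk_rev_walk: "is_walk ends T x y p \<Longrightarrow> is_walk ends T y x (rev_walk p)"
  by (induction p arbitrary: x) (auto simp: is_walk_append)

lemma is_walk_mono: "is_walk ends T x y p \<Longrightarrow> T \<subseteq> T' \<Longrightarrow> is_walk ends T' x y p"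
  by (induction p arbitrary: x) auto

lemma is_walk_edges: "is_walk ends T x y p \<Longrightarrow> f \<in> set p \<Longrightarrow> fst f \<in> T"
  by (induction p arbitrary: x) auto

lemma is_walk_oedges: "is_walk ends T x y p \<Longrightarrow> T \<subseteq> E \<Longrightarrow> set p \<subseteq> oedges E"
  using is_walk_edges by (fastforce simp: oedges_iff)

lemma is_walk_cancel:
  "is_walk ends T x y (a @ [f, orev f] @ b) \<Longrightarrow> is_walk ends T x y (a @ b)"
  by (auto simp: is_walk_append)

lemma non_backtracking_Nil [simp]: "non_backtracking []"
  and non_backtracking_single [simp]: "non_backtracking [f]"
  by (simp_all add: non_backtracking_def)

lemma non_backtracking_Cons_Cons [simp]:
  "non_backtracking (f # g # p) \<longleftrightarrow> g \<noteq> orev f \<and> non_backtracking (g # p)"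
  unfolding non_backtracking_def
  by (auto simp: less_Suc_eq_0_disj All_less_Suc2)

lemma non_backtracking_Cons:
  "non_backtracking (f # p) \<longleftrightarrow> non_backtracking p \<and> (p \<noteq> [] \<longrightarrow> hd p \<noteq> orev f)"
  by (cases p) auto

lemma non_backtracking_append:
  "non_backtracking (p @ q) \<longleftrightarrow> non_backtracking p \<and> non_backtracking q \<and>
     (p \<noteq> [] \<longrightarrow> q \<noteq> [] \<longrightarrow> hd q \<noteq> orev (last p))"
  by (induction p) (auto simp: non_backtracking_Cons)

lemma non_backtracking_rev_walk: "non_backtracking (rev_walk p) \<longleftrightarrow> non_backtracking p"
  by (induction p) (auto simp: non_backtracking_append non_backtracking_Cons last_rev_walk orev_eq_iff)

lemma backtracking_split:
  "\<not> non_backtracking p \<Longrightarrow> \<exists>a f b. p = a @ [f, orev f] @ b"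
proof (induction p rule: induct_list012)
  case (3 f g p)
  show ?case
  proof (cases "g = orev f")
    case True
    then show ?thesis by (intro exI[of _ "[]"]) auto
  next
    case False
    with 3 obtain a h b where "g # p = a @ [h, orev h] @ b" by auto
    then show ?thesis by (intro exI[of _ "f # a"]) auto
  qed
qed auto

lemma non_backtracking_walk_exists:
  "is_walk ends T x y p \<Longrightarrow> \<exists>q. is_walk ends T x y q \<and> non_backtracking q"
proof (induction "length p" arbitrary: p rule: less_induct)
  case less
  show ?case
  proof (cases "non_backtracking p")
    case False
    then obtain a f b where "p = a @ [f, orev f] @ b" using backtracking_split by blast
    then show ?thesis using less(1)[of "a @ b"] less(2) is_walk_cancel[of ends T x y a f b] by auto
  qed (use less in blast)
qed

section \<open>Weights\<close>

lemma wt_walk_Nil [simp]: "wt_walk T [] t = 1"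
  and wt_walk_Cons [simp]: "wt_walk T (f # p) t = wt_edge T f t * wt_walk T p t"
  and wt_walk_append [simp]: "wt_walk T (p @ q) t = wt_walk T p t * wt_walk T q t"
  by (simp_all add: wt_walk_def)

lemma wt_edge_orev: "wt_edge T (orev f) t = cnj (wt_edge T f t)"
  by (simp add: wt_edge_def orev_def)

lemma wt_walk_rev_walk: "wt_walk T (rev_walk p) t = cnj (wt_walk T p t)"
  by (induction p) (auto simp: wt_edge_orev)

lemma wt_walk_in_tree: "(\<And>f. f \<in> set p \<Longrightarrow> fst f \<in> T) \<Longrightarrow> wt_walk T p t = 1"
  by (induction p) (auto simp: wt_edge_def)

lemma torus_eqI:
  assumes "s \<in> torus E T" "t \<in> torus E T" "\<And>e. e \<in> E - T \<Longrightarrow> s e = t e"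
  shows "s = t"
proof
  fix e
  show "s e = t e" using assms by (cases "e \<in> E - T") (auto simp: torus_def)
qed

lemma wt_edge_norm: "t \<in> torus E T \<Longrightarrow> cmod (wt_edge T f t) = 1"
  by (cases "fst f \<in> E") (auto simp: wt_edge_def torus_def)

lemma wt_walk_norm: "t \<in> torus E T \<Longrightarrow> cmod (wt_walk T p t) = 1"
  by (induction p) (auto simp: norm_mult wt_edge_norm)

lemma mult_cnj_eq_1: "cmod z = 1 \<Longrightarrow> z * cnj z = 1"
  by (metis complex_norm_square of_real_1 power_one)

lemma wt_walk_mult_cnj: "t \<in> torus E T \<Longrightarrow> wt_walk T p t * cnj (wt_walk T p t) = 1"
  by (rule mult_cnj_eq_1[OF wt_walk_norm])

lemma continuous_on_wt_edge: "continuous_on A (wt_edge T f)"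
proof -
  have coord: "continuous_on A (\<lambda>t::'a \<Rightarrow> complex. t (fst f))"
    by (rule continuous_on_subset[OF continuous_on_product_coordinates subset_UNIV])
  show ?thesis
    by (cases "fst f \<in> T"; cases "snd f")
       (simp_all add: wt_edge_def[abs_def] coord continuous_on_cnj)
qed

lemma continuous_on_wt_walk: "continuous_on A (wt_walk T p)"
  by (induction p) (simp_all add: wt_walk_def[abs_def] continuous_on_mult continuous_on_wt_edge)

section \<open>Trees\<close>

definition acyclic_edges :: "('e \<Rightarrow> 'v \<times> 'v) \<Rightarrow> 'e set \<Rightarrow> bool" where
  "acyclic_edges ends T \<longleftrightarrow> \<not> (\<exists>x p. p \<noteq> [] \<and> is_walk ends T x x p \<and> non_backtracking p)"

lemma acyclic_edgesD:
  "acyclic_edges ends T \<Longrightarrow> is_walk ends T x x p \<Longrightarrow> non_backtracking p \<Longrightarrow> p = []"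
  by (auto simp: acyclic_edges_def)

lemma spanning_tree_acyclic: "spanning_tree V E ends T \<Longrightarrow> acyclic_edges ends T"
  by (simp add: spanning_tree_def acyclic_edges_def)

lemma spanning_tree_walk:
  "spanning_tree V E ends T \<Longrightarrow> x \<in> V \<Longrightarrow> y \<in> V \<Longrightarrow> \<exists>p. is_walk ends T x y p"
  by (simp add: spanning_tree_def)

lemma spanning_tree_subset: "spanning_tree V E ends T \<Longrightarrow> T \<subseteq> E"
  by (simp add: spanning_tree_def)

text \<open>Backtracks have weight 1 on the torus, and removing them from a closed walk in an
  acyclic edge set leaves the empty walk.\<close>
lemma wt_walk_closed_acyclic:
  assumes "acyclic_edges ends T" "is_walk ends T x x p" "t \<in> torus E \<tau>"
  shows "wt_walk \<tau> p t = 1"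
  using assms(2)
proof (induction "length p" arbitrary: p rule: less_induct)
  case less
  show ?case
  proof (cases "non_backtracking p")
    case True
    then have "p = []" using acyclic_edgesD[OF assms(1) less(2)] by blast
    then show ?thesis by simp
  next
    case False
    then obtain a f b where p: "p = a @ [f, orev f] @ b" using backtracking_split by blast
    have "wt_walk \<tau> (a @ b) t = 1"
      using less(1)[of "a @ b"] less(2) is_walk_cancel[of ends T x x a f b] p by auto
    moreover have "wt_edge \<tau> f t * wt_edge \<tau> (orev f) t = 1"
      by (simp add: wt_edge_orev mult_cnj_eq_1 wt_edge_norm[OF assms(3)])
    moreover have "wt_walk \<tau> p t = wt_walk \<tau> (a @ b) t * (wt_edge \<tau> f t * wt_edge \<tau> (orev f) t)"
      by (simp add: p mult_ac)
    ultimately show ?thesis by simp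
  qed
qed

lemma non_backtracking_walk_unique:
  assumes "acyclic_edges ends T"
  shows "is_walk ends T x y p \<Longrightarrow> is_walk ends T x y q \<Longrightarrow>
    non_backtracking p \<Longrightarrow> non_backtracking q \<Longrightarrow> p = q"
proof (induction p arbitrary: q y rule: rev_induct)
  case Nil
  then show ?case using acyclic_edgesD[OF assms, of x q] by simp
next
  case (snoc f p)
  show ?case
  proof (cases q rule: rev_cases)
    case Nil
    with snoc.prems show ?thesis using acyclic_edgesD[OF assms, of x "p @ [f]"] by simp
  next
    case (snoc q' g)
    show ?thesis
    proof (cases "f = g")
      case True
      then show ?thesis
        using snoc.IH[of "osrc ends f" q'] snoc.prems \<open>q = q' @ [g]\<close>
        by (simp add: is_walk_snoc non_backtracking_append)
    next
      case False
      have "is_walk ends T x x ((p @ [f]) @ rev_walk q)"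
        using snoc.prems(1) is_walk_rev_walk[OF snoc.prems(2)] by (auto simp: is_walk_append)
      moreover have "non_backtracking ((p @ [f]) @ rev_walk q)"
      proof -
        have "non_backtracking (rev_walk q)"
          using snoc.prems(4) by (simp only: non_backtracking_rev_walk)
        moreover have "hd (rev_walk q) = orev g"
          using \<open>q = q' @ [g]\<close> by simp
        ultimately show ?thesis using snoc.prems(3) False
          by (subst non_backtracking_append) (simp add: orev_eq_iff)
      qed
      ultimately have "(p @ [f]) @ rev_walk q = []" by (rule acyclic_edgesD[OF assms])
      then show ?thesis by simp
    qed
  qed
qed

lemma tree_path_eqI:
  assumes "acyclic_edges ends T" "is_walk ends T x y p" "non_backtracking p"
  shows "tree_path ends T x y = p"
  unfolding tree_path_def
proof (rule the_equality)
  fix q assume "is_walk ends T x y q \<and> non_backtracking q"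
  then show "q = p" using non_backtracking_walk_unique[OF assms(1) _ assms(2) _ assms(3)] by blast
qed (use assms in simp)

lemma
  assumes "spanning_tree V E ends T" "x \<in> V" "y \<in> V"
  shows is_walk_tree_path: "is_walk ends T x y (tree_path ends T x y)"
    and non_backtracking_tree_path: "non_backtracking (tree_path ends T x y)"
proof -
  from spanning_tree_walk[OF assms] obtain p0 where "is_walk ends T x y p0" ..
  from non_backtracking_walk_exists[OF this]
  obtain p where p: "is_walk ends T x y p" "non_backtracking p" by blast
  have "tree_path ends T x y = p"
    using tree_path_eqI[OF spanning_tree_acyclic[OF assms(1)] p] .
  with p show "is_walk ends T x y (tree_path ends T x y)" "non_backtracking (tree_path ends T x y)"
    by simp_all
qed

lemma tree_path_swap:
  assumes "spanning_tree V E ends T" "x \<in> V" "y \<in> V"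
  shows "tree_path ends T y x = rev_walk (tree_path ends T x y)"
  using is_walk_tree_path[OF assms] non_backtracking_tree_path[OF assms]
  by (intro tree_path_eqI[OF spanning_tree_acyclic[OF assms(1)]])
     (simp_all add: is_walk_rev_walk non_backtracking_rev_walk)

lemma wt_walk_tree_path_self:
  assumes "spanning_tree V E ends T" "x \<in> V" "y \<in> V"
  shows "wt_walk T (tree_path ends T x y) t = 1"
  using is_walk_edges[OF is_walk_tree_path[OF assms]] by (rule wt_walk_in_tree)

section \<open>Automorphisms\<close>

lemma graph_aut_bij_vertices: "graph_aut V E ends \<phi> \<Longrightarrow> bij_betw (fst \<phi>) V V"
  and graph_aut_bij_oedges: "graph_aut V E ends \<phi> \<Longrightarrow> bij_betw (snd \<phi>) (oedges E) (oedges E)"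
  and graph_aut_orev: "graph_aut V E ends \<phi> \<Longrightarrow> f \<in> oedges E \<Longrightarrow> snd \<phi> (orev f) = orev (snd \<phi> f)"
  and graph_aut_osrc: "graph_aut V E ends \<phi> \<Longrightarrow> f \<in> oedges E \<Longrightarrow> osrc ends (snd \<phi> f) = fst \<phi> (osrc ends f)"
  and graph_aut_otgt: "graph_aut V E ends \<phi> \<Longrightarrow> f \<in> oedges E \<Longrightarrow> otgt ends (snd \<phi> f) = fst \<phi> (otgt ends f)"
  by (simp_all add: graph_aut_def)

lemma graph_aut_oedges: "graph_aut V E ends \<phi> \<Longrightarrow> f \<in> oedges E \<Longrightarrow> snd \<phi> f \<in> oedges E"
  using graph_aut_bij_oedges bij_betwE by blast

lemma graph_aut_vertex: "graph_aut V E ends \<phi> \<Longrightarrow> v \<in> V \<Longrightarrow> fst \<phi> v \<in> V"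
  using graph_aut_bij_vertices bij_betwE by blast

lemma osrc_in_vertices: "finite_graph V E ends \<Longrightarrow> f \<in> oedges E \<Longrightarrow> osrc ends f \<in> V"
  and otgt_in_vertices: "finite_graph V E ends \<Longrightarrow> f \<in> oedges E \<Longrightarrow> otgt ends f \<in> V"
  by (auto simp: finite_graph_def oedges_def osrc_def otgt_def)

lemma fst_graph_aut_orientation:
  assumes "graph_aut V E ends \<phi>" "g \<in> oedges E"
  shows "fst (snd \<phi> (fst g, True)) = fst (snd \<phi> g)"
proof (cases "snd g")
  case False
  then have "(fst g, True) = orev g" by (simp add: orev_def)
  then show ?thesis using graph_aut_orev[OF assms] by simp
qed (cases g, simp)

lemma tree_image_eq: "tree_image pe T = (\<lambda>e. fst (pe (e, True))) ` T"
  by (auto simp: tree_image_def)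

lemma tree_image_memI:
  assumes "graph_aut V E ends \<phi>" "fst g \<in> T" "T \<subseteq> E"
  shows "fst (snd \<phi> g) \<in> tree_image (snd \<phi>) T"
proof -
  have "g \<in> oedges E" using assms(2,3) by (auto simp: oedges_iff)
  then have "fst (snd \<phi> g) = fst (snd \<phi> (fst g, True))"
    by (rule fst_graph_aut_orientation[OF assms(1), symmetric])
  then show ?thesis using assms(2) by (simp add: tree_image_eq)
qed

lemma tree_image_subset:
  "graph_aut V E ends \<phi> \<Longrightarrow> T \<subseteq> E \<Longrightarrow> tree_image (snd \<phi>) T \<subseteq> E"
  using graph_aut_oedges by (fastforce simp: tree_image_def oedges_iff)

lemma is_walk_graph_aut:
  assumes "graph_aut V E ends \<phi>" "T \<subseteq> E"
  shows "is_walk ends T x y p \<Longrightarrow>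
    is_walk ends (tree_image (snd \<phi>) T) (fst \<phi> x) (fst \<phi> y) (map (snd \<phi>) p)"
proof (induction p arbitrary: x)
  case (Cons f p)
  then have "f \<in> oedges E" using assms(2) by (auto simp: oedges_iff)
  with Cons tree_image_memI[OF assms(1) _ assms(2), of f] show ?case
    by (simp add: graph_aut_osrc[OF assms(1)] graph_aut_otgt[OF assms(1)])
qed simp

lemma non_backtracking_graph_aut:
  assumes "graph_aut V E ends \<phi>"
  shows "set p \<subseteq> oedges E \<Longrightarrow> non_backtracking p \<Longrightarrow> non_backtracking (map (snd \<phi>) p)"
proof (induction p rule: induct_list012)
  case (3 f g p)
  have fg: "f \<in> oedges E" "g \<in> oedges E" "orev f \<in> oedges E" using 3 by (auto simp: oedges_iff)
  have "snd \<phi> g \<noteq> snd \<phi> (orev f)"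
    using 3 inj_onD[OF bij_betw_imp_inj_on[OF graph_aut_bij_oedges[OF assms]] _ fg(2,3)] by auto
  with 3 show ?case by (simp add: graph_aut_orev[OF assms fg(1)])
qed simp_all

definition aut_inv ::
  "'v set \<Rightarrow> 'e set \<Rightarrow> ('v \<Rightarrow> 'v) \<times> ('e \<times> bool \<Rightarrow> 'e \<times> bool)
    \<Rightarrow> ('v \<Rightarrow> 'v) \<times> ('e \<times> bool \<Rightarrow> 'e \<times> bool)" where
  "aut_inv V E \<phi> = (inv_into V (fst \<phi>), inv_into (oedges E) (snd \<phi>))"

lemma graph_aut_aut_inv:
  assumes \<phi>: "graph_aut V E ends \<phi>" and G: "finite_graph V E ends"
  shows "graph_aut V E ends (aut_inv V E \<phi>)"
  unfolding graph_aut_def aut_inv_def fst_conv snd_conv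
proof (intro conjI ballI)
  have bV: "bij_betw (fst \<phi>) V V" and bE: "bij_betw (snd \<phi>) (oedges E) (oedges E)"
    using \<phi> by (simp_all add: graph_aut_def)
  show "bij_betw (inv_into V (fst \<phi>)) V V" "bij_betw (inv_into (oedges E) (snd \<phi>)) (oedges E) (oedges E)"
    using bij_betw_inv_into[OF bV] bij_betw_inv_into[OF bE] .
  fix f assume f: "f \<in> oedges E"
  define g where "g = inv_into (oedges E) (snd \<phi>) f"
  have g: "g \<in> oedges E" "snd \<phi> g = f"
    unfolding g_def using bij_betw_inv_into_right[OF bE f] bij_betw_inv_into[OF bE] f bij_betwE by blast+
  have inv_vertex: "inv_into V (fst \<phi>) (fst \<phi> v) = v" if "v \<in> V" for v
    using bij_betw_inv_into_left[OF bV that] .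
  have "inv_into (oedges E) (snd \<phi>) (snd \<phi> (orev g)) = orev g"
    using bij_betw_inv_into_left[OF bE] g(1) by (simp add: oedges_iff)
  then show "inv_into (oedges E) (snd \<phi>) (orev f) = orev (inv_into (oedges E) (snd \<phi>) f)"
    using graph_aut_orev[OF \<phi> g(1)] g by (simp add: g_def)
  show "osrc ends (inv_into (oedges E) (snd \<phi>) f) = inv_into V (fst \<phi>) (osrc ends f)"
    using graph_aut_osrc[OF \<phi> g(1)] inv_vertex[OF osrc_in_vertices[OF G g(1)]] g by (simp add: g_def)
  show "otgt ends (inv_into (oedges E) (snd \<phi>) f) = inv_into V (fst \<phi>) (otgt ends f)"
    using graph_aut_otgt[OF \<phi> g(1)] inv_vertex[OF otgt_in_vertices[OF G g(1)]] g by (simp add: g_def)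
qed

lemma tree_image_aut_comp:
  assumes "graph_aut V E ends \<phi>1" "graph_aut V E ends \<phi>2" "T \<subseteq> E"
  shows "tree_image (snd \<phi>1) (tree_image (snd \<phi>2) T) = tree_image (snd (aut_comp \<phi>1 \<phi>2)) T"
proof -
  have "fst (snd \<phi>1 (fst (snd \<phi>2 (e, True)), True)) = fst (snd \<phi>1 (snd \<phi>2 (e, True)))"
    if "e \<in> T" for e
    using that assms(3)
    by (intro fst_graph_aut_orientation[OF assms(1) graph_aut_oedges[OF assms(2)]]) (auto simp: oedges_iff)
  then show ?thesis
    unfolding tree_image_eq image_image aut_comp_def snd_conv comp_def by (intro image_cong) simp_all
qed

lemma tree_image_id:
  "(\<And>g. g \<in> oedges E \<Longrightarrow> pe g = g) \<Longrightarrow> T \<subseteq> E \<Longrightarrow> tree_image pe T = T"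
proof -
  assume "\<And>g. g \<in> oedges E \<Longrightarrow> pe g = g" "T \<subseteq> E"
  then have "(\<lambda>e. fst (pe (e, True))) ` T = (\<lambda>e. e) ` T"
    by (intro image_cong) (auto simp: oedges_iff)
  then show ?thesis by (simp add: tree_image_eq)
qed

lemma aut_comp_aut_inv:
  assumes "graph_aut V E ends \<phi>"
  shows "\<And>v. v \<in> V \<Longrightarrow> fst (aut_comp \<phi> (aut_inv V E \<phi>)) v = v"
    and "\<And>g. g \<in> oedges E \<Longrightarrow> snd (aut_comp \<phi> (aut_inv V E \<phi>)) g = g"
    and "\<And>v. v \<in> V \<Longrightarrow> fst (aut_comp (aut_inv V E \<phi>) \<phi>) v = v"
    and "\<And>g. g \<in> oedges E \<Longrightarrow> snd (aut_comp (aut_inv V E \<phi>) \<phi>) g = g"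
  using graph_aut_bij_vertices[OF assms] graph_aut_bij_oedges[OF assms]
  by (simp_all add: aut_comp_def aut_inv_def bij_betw_inv_into_left bij_betw_inv_into_right)

lemma tree_image_aut_inv:
  assumes "graph_aut V E ends \<phi>" "finite_graph V E ends" "T \<subseteq> E"
  shows "tree_image (snd (aut_inv V E \<phi>)) (tree_image (snd \<phi>) T) = T"
  using tree_image_aut_comp[OF graph_aut_aut_inv[OF assms(1,2)] assms(1,3)]
    tree_image_id[OF aut_comp_aut_inv(4)[OF assms(1)] assms(3)] by simp

lemma spanning_tree_image:
  assumes \<phi>: "graph_aut V E ends \<phi>" and G: "finite_graph V E ends" and T: "spanning_tree V E ends T"
  shows "spanning_tree V E ends (tree_image (snd \<phi>) T)"
  unfolding spanning_tree_def
proof (intro conjI ballI notI)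
  have TE: "T \<subseteq> E" using spanning_tree_subset[OF T] .
  show sub: "tree_image (snd \<phi>) T \<subseteq> E" using tree_image_subset[OF \<phi> TE] .
  have surj: "fst \<phi> ` V = V" using bij_betw_imp_surj_on[OF graph_aut_bij_vertices[OF \<phi>]] .
  fix x y assume "x \<in> V" "y \<in> V"
  then have "x \<in> fst \<phi> ` V" "y \<in> fst \<phi> ` V" by (simp_all only: surj)
  then obtain x0 y0 where xy0: "x0 \<in> V" "y0 \<in> V" "x = fst \<phi> x0" "y = fst \<phi> y0" by blast
  from spanning_tree_walk[OF T xy0(1,2)] obtain p where "is_walk ends T x0 y0 p" ..
  from is_walk_graph_aut[OF \<phi> TE this]
  show "\<exists>p. is_walk ends (tree_image (snd \<phi>) T) x y p" unfolding xy0(3,4) ..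
next
  assume "\<exists>x p. p \<noteq> [] \<and> is_walk ends (tree_image (snd \<phi>) T) x x p \<and> non_backtracking p"
  then obtain x p where p: "p \<noteq> []" "is_walk ends (tree_image (snd \<phi>) T) x x p" "non_backtracking p"
    by blast
  let ?\<psi> = "aut_inv V E \<phi>"
  have \<psi>: "graph_aut V E ends ?\<psi>" using graph_aut_aut_inv[OF \<phi> G] .
  have TE: "T \<subseteq> E" using spanning_tree_subset[OF T] .
  have "is_walk ends T (fst ?\<psi> x) (fst ?\<psi> x) (map (snd ?\<psi>) p)"
    using is_walk_graph_aut[OF \<psi> tree_image_subset[OF \<phi> TE] p(2)] tree_image_aut_inv[OF \<phi> G TE]
    by simp
  moreover have "non_backtracking (map (snd ?\<psi>) p)"
    using non_backtracking_graph_aut[OF \<psi> is_walk_oedges[OF p(2) tree_image_subset[OF \<phi> TE]] p(3)] .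
  ultimately show False
    using acyclic_edgesD[OF spanning_tree_acyclic[OF T]] p(1) by blast
qed

lemma tree_path_graph_aut:
  assumes \<phi>: "graph_aut V E ends \<phi>" and G: "finite_graph V E ends" and T: "spanning_tree V E ends T"
    and "x \<in> V" "y \<in> V"
  shows "map (snd \<phi>) (tree_path ends T x y) = tree_path ends (tree_image (snd \<phi>) T) (fst \<phi> x) (fst \<phi> y)"
proof -
  have TE: "T \<subseteq> E" using spanning_tree_subset[OF T] .
  note p = is_walk_tree_path[OF T assms(4,5)] non_backtracking_tree_path[OF T assms(4,5)]
  show ?thesis
    by (rule tree_path_eqI[symmetric, OF spanning_tree_acyclic[OF spanning_tree_image[OF \<phi> G T]]
          is_walk_graph_aut[OF \<phi> TE p(1)] non_backtracking_graph_aut[OF \<phi> is_walk_oedges[OF p(1) TE] p(2)]])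
qed

lemma sum_oedges_between_graph_aut:
  assumes \<phi>: "graph_aut V E ends \<phi>" and G: "finite_graph V E ends" and "x \<in> V" "y \<in> V"
  shows "(\<Sum>f\<in>{f\<in>oedges E. osrc ends f = fst \<phi> x \<and> otgt ends f = fst \<phi> y}. F f)
       = (\<Sum>g\<in>{g\<in>oedges E. osrc ends g = x \<and> otgt ends g = y}. F (snd \<phi> g))"
proof (rule sum.reindex_bij_betw[symmetric], rule bij_betw_imageI)
  have injV: "inj_on (fst \<phi>) V" and injE: "inj_on (snd \<phi>) (oedges E)"
    using graph_aut_bij_vertices[OF \<phi>] graph_aut_bij_oedges[OF \<phi>] by (simp_all add: bij_betw_def)
  show "inj_on (snd \<phi>) {g\<in>oedges E. osrc ends g = x \<and> otgt ends g = y}"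
    using injE by (rule inj_on_subset) auto
  show "snd \<phi> ` {g\<in>oedges E. osrc ends g = x \<and> otgt ends g = y}
      = {f\<in>oedges E. osrc ends f = fst \<phi> x \<and> otgt ends f = fst \<phi> y}"
  proof (intro equalityI subsetI)
    fix f assume f: "f \<in> {f\<in>oedges E. osrc ends f = fst \<phi> x \<and> otgt ends f = fst \<phi> y}"
    then obtain g where g: "g \<in> oedges E" "f = snd \<phi> g"
      using bij_betw_imp_surj_on[OF graph_aut_bij_oedges[OF \<phi>]] by blast
    have "osrc ends g = x" "otgt ends g = y"
      using f g graph_aut_osrc[OF \<phi> g(1)] graph_aut_otgt[OF \<phi> g(1)]
        inj_onD[OF injV _ osrc_in_vertices[OF G g(1)] \<open>x \<in> V\<close>]
        inj_onD[OF injV _ otgt_in_vertices[OF G g(1)] \<open>y \<in> V\<close>] by auto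
    with g show "f \<in> snd \<phi> ` {g\<in>oedges E. osrc ends g = x \<and> otgt ends g = y}" by blast
  qed (auto simp: graph_aut_oedges[OF \<phi>] graph_aut_osrc[OF \<phi>] graph_aut_otgt[OF \<phi>])
qed

section \<open>Continuous functions on a set and their *-automorphisms\<close>

lemma Cfun_vanishes: "F \<in> Cfun S \<Longrightarrow> t \<notin> S \<Longrightarrow> F t = 0"
  by (simp add: Cfun_def)

lemma Cfun_add: "F \<in> Cfun S \<Longrightarrow> G \<in> Cfun S \<Longrightarrow> (\<lambda>s. F s + G s) \<in> Cfun S"
  by (simp add: Cfun_def continuous_on_add)

lemma Cfun_mult: "F \<in> Cfun S \<Longrightarrow> G \<in> Cfun S \<Longrightarrow> (\<lambda>s. F s * G s) \<in> Cfun S"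
  by (simp add: Cfun_def continuous_on_mult)

lemma Cfun_cmult: "F \<in> Cfun S \<Longrightarrow> (\<lambda>s. c * F s) \<in> Cfun S"
  by (simp add: Cfun_def continuous_on_mult)

lemma Cfun_cnj: "F \<in> Cfun S \<Longrightarrow> (\<lambda>s. cnj (F s)) \<in> Cfun S"
  by (simp add: Cfun_def)

lemma Cfun_as_el: "continuous_on S f \<Longrightarrow> as_el S f \<in> Cfun S"
  using continuous_on_cong[of S S "as_el S f" f] by (simp add: Cfun_def as_el_def)

lemma Cfun_one: "as_el S (\<lambda>s. 1) \<in> Cfun S"
  by (simp add: Cfun_as_el)

lemma Cfun_coordinate: "as_el S (\<lambda>s. s e) \<in> Cfun S"
  by (intro Cfun_as_el continuous_on_subset[OF continuous_on_product_coordinates subset_UNIV])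

lemma star_aut_Cfun: "star_aut S \<psi> \<Longrightarrow> F \<in> Cfun S \<Longrightarrow> \<psi> F \<in> Cfun S"
  unfolding star_aut_def using bij_betwE by blast

lemma star_aut_add: "star_aut S \<psi> \<Longrightarrow> F \<in> Cfun S \<Longrightarrow> G \<in> Cfun S \<Longrightarrow> \<psi> (\<lambda>s. F s + G s) = (\<lambda>s. \<psi> F s + \<psi> G s)"
  and star_aut_mult: "star_aut S \<psi> \<Longrightarrow> F \<in> Cfun S \<Longrightarrow> G \<in> Cfun S \<Longrightarrow> \<psi> (\<lambda>s. F s * G s) = (\<lambda>s. \<psi> F s * \<psi> G s)"
  and star_aut_cmult: "star_aut S \<psi> \<Longrightarrow> F \<in> Cfun S \<Longrightarrow> \<psi> (\<lambda>s. c * F s) = (\<lambda>s. c * \<psi> F s)"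
  and star_aut_cnj: "star_aut S \<psi> \<Longrightarrow> F \<in> Cfun S \<Longrightarrow> \<psi> (\<lambda>s. cnj (F s)) = (\<lambda>s. cnj (\<psi> F s))"
  and star_aut_one: "star_aut S \<psi> \<Longrightarrow> \<psi> (as_el S (\<lambda>s. 1)) = as_el S (\<lambda>s. 1)"
  by (simp_all add: star_aut_def)

lemma star_aut_add_const:
  assumes "star_aut S \<psi>" "X \<in> Cfun S" "t \<in> S"
  shows "\<psi> (\<lambda>s. X s + c * as_el S (\<lambda>s. 1) s) t = \<psi> X t + c"
proof -
  have "\<psi> (\<lambda>s. X s + c * as_el S (\<lambda>s. 1) s) = (\<lambda>s. \<psi> X s + c * \<psi> (as_el S (\<lambda>s. 1)) s)"
    by (simp only: star_aut_add[OF assms(1,2) Cfun_cmult[OF Cfun_one]] star_aut_cmult[OF assms(1) Cfun_one])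
  then show ?thesis using assms(3) star_aut_one[OF assms(1)] by (simp add: as_el_def)
qed

lemma star_aut_mult_cnj:
  assumes "star_aut S \<psi>" "X \<in> Cfun S"
  shows "\<psi> (\<lambda>s. X s * cnj (X s)) = (\<lambda>s. \<psi> X s * cnj (\<psi> X s))"
  by (simp only: star_aut_mult[OF assms Cfun_cnj[OF assms(2)]] star_aut_cnj[OF assms])

lemma star_aut_sum:
  assumes "star_aut S \<psi>" "finite I" "\<And>i. i \<in> I \<Longrightarrow> F i \<in> Cfun S"
  shows "(\<lambda>s. \<Sum>i\<in>I. F i s) \<in> Cfun S \<and> \<psi> (\<lambda>s. \<Sum>i\<in>I. F i s) t = (\<Sum>i\<in>I. \<psi> (F i) t)"
  using assms(2,3)
proof (induction I rule: finite_induct)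
  case empty
  have "\<psi> (\<lambda>s. 0 * as_el S (\<lambda>s. 1) s) = (\<lambda>s. 0 * \<psi> (as_el S (\<lambda>s. 1)) s)"
    by (rule star_aut_cmult[OF assms(1) Cfun_one])
  then show ?case using Cfun_cmult[OF Cfun_one, of 0 S] by simp
next
  case (insert i I)
  then have Fi: "F i \<in> Cfun S" and IH: "(\<lambda>s. \<Sum>i\<in>I. F i s) \<in> Cfun S"
    "\<psi> (\<lambda>s. \<Sum>i\<in>I. F i s) t = (\<Sum>i\<in>I. \<psi> (F i) t)" by simp_all
  show ?case using Cfun_add[OF Fi IH(1)] star_aut_add[OF assms(1) Fi IH(1)] IH(2) insert(1,2) by simp
qed

text \<open>Evaluation at a point after a *-automorphism is a character, so it cannot vanish
  on an invertible function.\<close>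
lemma star_aut_nonvanishing:
  assumes \<psi>: "star_aut S \<psi>" and "t \<in> S" and H: "H \<in> Cfun S" and nz: "\<And>s. s \<in> S \<Longrightarrow> H s \<noteq> 0"
  shows "\<psi> H t \<noteq> 0"
proof -
  define K where "K = as_el S (\<lambda>s. 1 / H s)"
  have "continuous_on S (\<lambda>s. 1 / H s)"
    using H nz by (intro continuous_on_divide continuous_on_const) (auto simp: Cfun_def)
  then have K: "K \<in> Cfun S" unfolding K_def by (rule Cfun_as_el)
  have "(\<lambda>s. H s * K s) = as_el S (\<lambda>s. 1)"
    using nz Cfun_vanishes[OF H] by (auto simp: K_def as_el_def)
  then have "\<psi> H t * \<psi> K t = 1"
    using star_aut_mult[OF \<psi> H K] star_aut_one[OF \<psi>] \<open>t \<in> S\<close> by (metis as_el_def)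
  then show ?thesis by auto
qed

lemma mult_cnj_add_sum_eq_0:
  fixes z :: complex
  assumes "finite I" "z * cnj z + (\<Sum>e\<in>I. w e * cnj (w e)) = 0"
  shows "z = 0" "\<And>e. e \<in> I \<Longrightarrow> w e = 0"
proof -
  have "of_real ((cmod z)\<^sup>2 + (\<Sum>e\<in>I. (cmod (w e))\<^sup>2)) = z * cnj z + (\<Sum>e\<in>I. w e * cnj (w e))"
    by (simp only: of_real_add of_real_sum complex_norm_square)
  then have "(cmod z)\<^sup>2 + (\<Sum>e\<in>I. (cmod (w e))\<^sup>2) = 0"
    using assms(2) by (simp only: of_real_eq_0_iff)
  then show "z = 0" "\<And>e. e \<in> I \<Longrightarrow> w e = 0"
    using assms(1) by (simp_all add: add_nonneg_eq_0_iff sum_nonneg sum_nonneg_eq_0_iff)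
qed

text \<open>Otherwise |F - \<psi> F t|^2 + (\<Sum>e\<in>I. |z_e - p e|^2) would be invertible in C(S)
  but killed by the character F \<mapsto> \<psi> F t.\<close>
lemma star_aut_eval_eq:
  assumes \<psi>: "star_aut S \<psi>" and "finite I" and t: "t \<in> S" and p: "p \<in> S"
    and coords: "\<And>e. e \<in> I \<Longrightarrow> \<psi> (as_el S (\<lambda>s. s e)) t = p e"
    and sep: "\<And>s. s \<in> S \<Longrightarrow> (\<And>e. e \<in> I \<Longrightarrow> s e = p e) \<Longrightarrow> s = p"
    and F: "F \<in> Cfun S"
  shows "\<psi> F t = F p"
proof (rule ccontr)
  assume ne: "\<psi> F t \<noteq> F p"
  define one where "one = as_el S (\<lambda>s. 1::complex)"
  define G where "G = (\<lambda>s. F s + (- \<psi> F t) * one s)"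
  define D where "D e = (\<lambda>s. as_el S (\<lambda>s. s e) s + (- p e) * one s)" for e
  define H where "H = (\<lambda>s. G s * cnj (G s) + (\<Sum>e\<in>I. D e s * cnj (D e s)))"
  have G: "G \<in> Cfun S"
    unfolding G_def one_def by (rule Cfun_add[OF F Cfun_cmult[OF Cfun_one]])
  have D: "D e \<in> Cfun S" for e
    unfolding D_def one_def by (rule Cfun_add[OF Cfun_coordinate Cfun_cmult[OF Cfun_one]])
  have sq: "(\<lambda>s. X s * cnj (X s)) \<in> Cfun S" if "X \<in> Cfun S" for X
    using that by (simp add: Cfun_mult Cfun_cnj)
  note sum = star_aut_sum[OF \<psi> \<open>finite I\<close>, of "\<lambda>e s. D e s * cnj (D e s)", OF sq[OF D]]
  have G0: "\<psi> G t = 0"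
    unfolding G_def one_def by (simp only: star_aut_add_const[OF \<psi> F t]) simp
  have D0: "\<psi> (D e) t = 0" if "e \<in> I" for e
    unfolding D_def one_def
    by (simp only: star_aut_add_const[OF \<psi> Cfun_coordinate t] coords[OF that]) simp
  have "\<psi> H t = 0"
    unfolding H_def using G0 D0 sum star_aut_add[OF \<psi> sq[OF G] conjunct1[OF sum]] star_aut_mult_cnj[OF \<psi>] G D
    by simp
  moreover have "\<psi> H t \<noteq> 0"
  proof (rule star_aut_nonvanishing[OF \<psi> t])
    show "H \<in> Cfun S" unfolding H_def using Cfun_add[OF sq[OF G] conjunct1[OF sum]] .
    fix s assume s: "s \<in> S"
    show "H s \<noteq> 0"
    proof
      assume "H s = 0"
      then have "G s * cnj (G s) + (\<Sum>e\<in>I. D e s * cnj (D e s)) = 0" by (simp only: H_def)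
      note zero = mult_cnj_add_sum_eq_0[OF \<open>finite I\<close> this]
      have "s = p"
        using sep[OF s] zero(2) s by (simp add: D_def one_def as_el_def)
      then show False using zero(1) ne s by (simp add: G_def one_def as_el_def)
    qed
  qed
  ultimately show False by contradiction
qed

definition pullback ::
  "('e \<Rightarrow> complex) set \<Rightarrow> (('e \<Rightarrow> complex) \<Rightarrow> ('e \<Rightarrow> complex))
    \<Rightarrow> (('e \<Rightarrow> complex) \<Rightarrow> complex) \<Rightarrow> ('e \<Rightarrow> complex) \<Rightarrow> complex" where
  "pullback S h F = as_el S (F \<circ> h)"

lemma pullback_Cfun:
  assumes "continuous_on S h" "h ` S \<subseteq> S" "F \<in> Cfun S"
  shows "pullback S h F \<in> Cfun S"
  unfolding pullback_def
  using assms by (intro Cfun_as_el continuous_on_compose) (auto simp: Cfun_def intro: continuous_on_subset)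

lemma pullback_pullback:
  assumes "h1 ` S \<subseteq> S" "\<And>t. t \<in> S \<Longrightarrow> h t = h2 (h1 t)"
  shows "pullback S h F = pullback S h1 (pullback S h2 F)"
  unfolding pullback_def as_el_def using assms by (intro ext) (auto simp: image_subset_iff)

lemma pullback_inverse:
  assumes "homeomorphism S S h g" "F \<in> Cfun S"
  shows "pullback S g (pullback S h F) = F"
  unfolding pullback_def as_el_def
  using assms by (intro ext) (auto simp: homeomorphism_def Cfun_def)

lemma star_aut_pullback:
  assumes hg: "homeomorphism S S h g"
  shows "star_aut S (pullback S h)"
  unfolding star_aut_def
proof (intro conjI ballI allI)
  have gh: "homeomorphism S S g h" using hg by (rule homeomorphism_symD)
  have maps: "continuous_on S h" "h ` S \<subseteq> S" "continuous_on S g" "g ` S \<subseteq> S"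
    using hg by (auto simp: homeomorphism_def)
  show "bij_betw (pullback S h) (Cfun S) (Cfun S)"
    by (rule bij_betw_byWitness[where f' = "pullback S g"])
       (use pullback_inverse[OF hg] pullback_inverse[OF gh] pullback_Cfun maps in auto)
  show "pullback S h (as_el S (\<lambda>t. 1)) = as_el S (\<lambda>t. 1)"
    unfolding pullback_def as_el_def using maps by (intro ext) auto
qed (auto simp: pullback_def as_el_def)

lemma sum_nth_distinct_delta:
  assumes "distinct xs" "a < length xs"
  shows "(\<Sum>l<length xs. if xs ! a = xs ! l then X l else 0) = X a"
proof -
  have "(\<Sum>l<length xs. if xs ! a = xs ! l then X l else 0) = (\<Sum>l<length xs. if a = l then X l else 0)"
    using nth_eq_iff_index_eq[OF assms(1) assms(2)] by (intro sum.cong) auto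
  then show ?thesis using assms(2) by simp
qed

section \<open>The torus map of an automorphism\<close>

locale rooted_spanning_tree =
  fixes V :: "'v set" and E :: "'e set" and ends :: "'e \<Rightarrow> 'v \<times> 'v"
    and \<tau> :: "'e set" and r :: 'v
  assumes finite_graph: "finite_graph V E ends"
    and spanning_tree: "spanning_tree V E ends \<tau>"
    and root: "r \<in> V"
begin

abbreviation S :: "('e \<Rightarrow> complex) set" where
  "S \<equiv> torus E \<tau>"

abbreviation moved_tree :: "('v \<Rightarrow> 'v) \<times> ('e \<times> bool \<Rightarrow> 'e \<times> bool) \<Rightarrow> 'e set" where
  "moved_tree \<phi> \<equiv> tree_image (snd \<phi>) \<tau>"

abbreviation rwt :: "('v \<Rightarrow> 'v) \<times> ('e \<times> bool \<Rightarrow> 'e \<times> bool) \<Rightarrow> 'e \<times> bool \<Rightarrow> ('e \<Rightarrow> complex) \<Rightarrow> complex" where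
  "rwt \<phi> \<equiv> regauged_wt ends \<tau> r \<phi>"

definition gauge_phase :: "('v \<Rightarrow> 'v) \<times> ('e \<times> bool \<Rightarrow> 'e \<times> bool) \<Rightarrow> ('e \<Rightarrow> complex) \<Rightarrow> 'v \<Rightarrow> complex" where
  "gauge_phase \<phi> t v = wt_walk \<tau> (tree_path ends (moved_tree \<phi>) (fst \<phi> r) v) t"

text \<open>This is h_phi; off the torus it is the identity, a junk value.\<close>
definition torus_map ::
  "('v \<Rightarrow> 'v) \<times> ('e \<times> bool \<Rightarrow> 'e \<times> bool) \<Rightarrow> ('e \<Rightarrow> complex) \<Rightarrow> 'e \<Rightarrow> complex" where
  "torus_map \<phi> t = (if t \<in> S then (\<lambda>e. if e \<in> E - \<tau> then rwt \<phi> (snd \<phi> (e, True)) t else 1) else t)"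

lemma tree_subset: "\<tau> \<subseteq> E"
  using spanning_tree by (rule spanning_tree_subset)

lemma spanning_moved_tree: "graph_aut V E ends \<phi> \<Longrightarrow> spanning_tree V E ends (moved_tree \<phi>)"
  using spanning_tree_image[OF _ finite_graph spanning_tree] .

lemma moved_root: "graph_aut V E ends \<phi> \<Longrightarrow> fst \<phi> r \<in> V"
  using graph_aut_vertex[OF _ root] .

lemma regauged_wt_loop:
  "rwt \<phi> f = wt_walk \<tau> (tree_path ends (moved_tree \<phi>) (fst \<phi> r) (osrc ends f) @ [f]
      @ tree_path ends (moved_tree \<phi>) (otgt ends f) (fst \<phi> r))"
  by (simp add: regauged_wt_def Let_def fun_eq_iff)

lemma regauged_wt_gauge:
  assumes \<phi>: "graph_aut V E ends \<phi>" and f: "f \<in> oedges E"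
  shows "rwt \<phi> f t = gauge_phase \<phi> t (osrc ends f) * wt_edge \<tau> f t * cnj (gauge_phase \<phi> t (otgt ends f))"
  using tree_path_swap[OF spanning_moved_tree[OF \<phi>] moved_root[OF \<phi>] otgt_in_vertices[OF finite_graph f]]
  by (simp add: regauged_wt_loop gauge_phase_def wt_walk_rev_walk mult.assoc)

lemma gauge_phase_mult_cnj: "t \<in> S \<Longrightarrow> gauge_phase \<phi> t v * cnj (gauge_phase \<phi> t v) = 1"
  unfolding gauge_phase_def by (rule wt_walk_mult_cnj)

lemma regauged_wt_orev:
  assumes "graph_aut V E ends \<phi>" "f \<in> oedges E"
  shows "rwt \<phi> (orev f) t = cnj (rwt \<phi> f t)"
  using assms by (simp add: regauged_wt_gauge oedges_iff wt_edge_orev mult_ac)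

lemma regauged_wt_moved_tree:
  assumes \<phi>: "graph_aut V E ends \<phi>" and f: "f \<in> oedges E" "fst f \<in> moved_tree \<phi>" and t: "t \<in> S"
  shows "rwt \<phi> f t = 1"
proof -
  note T' = spanning_moved_tree[OF \<phi>] and r' = moved_root[OF \<phi>]
  have "is_walk ends (moved_tree \<phi>) (fst \<phi> r) (fst \<phi> r)
     (tree_path ends (moved_tree \<phi>) (fst \<phi> r) (osrc ends f) @ [f]
      @ tree_path ends (moved_tree \<phi>) (otgt ends f) (fst \<phi> r))"
    using is_walk_tree_path[OF T' r' osrc_in_vertices[OF finite_graph f(1)]]
      is_walk_tree_path[OF T' otgt_in_vertices[OF finite_graph f(1)] r'] f(2)
    by (auto simp: is_walk_append)
  from wt_walk_closed_acyclic[OF spanning_tree_acyclic[OF T'] this t] show ?thesis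
    by (simp add: regauged_wt_loop)
qed

lemma continuous_on_regauged_wt: "continuous_on A (rwt \<phi> f)"
  unfolding regauged_wt_loop by (rule continuous_on_wt_walk)

lemma norm_regauged_wt: "t \<in> S \<Longrightarrow> cmod (rwt \<phi> f t) = 1"
  unfolding regauged_wt_loop by (rule wt_walk_norm)

lemma torus_map_in_torus: "t \<in> S \<Longrightarrow> torus_map \<phi> t \<in> S"
  using norm_regauged_wt by (auto simp: torus_map_def torus_def)

lemma continuous_on_torus_map: "continuous_on S (torus_map \<phi>)"
proof -
  have "continuous_on S (\<lambda>t. if e \<in> E - \<tau> then rwt \<phi> (snd \<phi> (e, True)) t else 1)" for e
    by (cases "e \<in> E - \<tau>") (auto simp: continuous_on_regauged_wt)
  then have "continuous_on S (\<lambda>t e. if e \<in> E - \<tau> then rwt \<phi> (snd \<phi> (e, True)) t else 1)"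
    by (rule continuous_on_coordinatewise_then_product)
  then show ?thesis
    by (rule continuous_on_eq) (simp add: torus_map_def)
qed

lemma wt_edge_torus_map:
  assumes \<phi>: "graph_aut V E ends \<phi>" and f: "f \<in> oedges E" and t: "t \<in> S"
  shows "wt_edge \<tau> f (torus_map \<phi> t) = rwt \<phi> (snd \<phi> f) t"
proof (cases "fst f \<in> \<tau>")
  case True
  then show ?thesis
    using regauged_wt_moved_tree[OF \<phi> graph_aut_oedges[OF \<phi> f] tree_image_memI[OF \<phi> True tree_subset] t]
    by (simp add: wt_edge_def)
next
  case False
  then have e: "fst f \<in> E - \<tau>" "(fst f, True) \<in> oedges E" using f by (simp_all add: oedges_iff)
  show ?thesis
  proof (cases "snd f")
    case True
    then have "f = (fst f, True)" by (cases f) simp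
    then show ?thesis using e t False True by (simp add: wt_edge_def torus_map_def)
  next
    case False
    then have "f = orev (fst f, True)" by (cases f) (simp add: orev_def)
    then have "rwt \<phi> (snd \<phi> f) t = cnj (rwt \<phi> (snd \<phi> (fst f, True)) t)"
      using graph_aut_orev[OF \<phi> e(2)] regauged_wt_orev[OF \<phi> graph_aut_oedges[OF \<phi> e(2)]] by metis
    then show ?thesis using e t \<open>fst f \<notin> \<tau>\<close> False by (simp add: wt_edge_def torus_map_def)
  qed
qed

text \<open>Along a walk the gauge factors telescope.\<close>
lemma wt_walk_torus_map:
  assumes \<phi>: "graph_aut V E ends \<phi>" and t: "t \<in> S"
  shows "is_walk ends E x y p \<Longrightarrow>
    wt_walk \<tau> p (torus_map \<phi> t)
      = gauge_phase \<phi> t (fst \<phi> x) * wt_walk \<tau> (map (snd \<phi>) p) t * cnj (gauge_phase \<phi> t (fst \<phi> y))"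
proof (induction p arbitrary: x)
  case Nil
  then show ?case using gauge_phase_mult_cnj[OF t] by simp
next
  case (Cons f p)
  then have f: "f \<in> oedges E" "osrc ends f = x" "is_walk ends E (otgt ends f) y p"
    by (auto simp: oedges_iff)
  let ?c = "gauge_phase \<phi> t (fst \<phi> (otgt ends f))"
  have "wt_walk \<tau> (f # p) (torus_map \<phi> t)
      = gauge_phase \<phi> t (fst \<phi> x) * wt_edge \<tau> (snd \<phi> f) t * (cnj ?c * ?c)
        * wt_walk \<tau> (map (snd \<phi>) p) t * cnj (gauge_phase \<phi> t (fst \<phi> y))"
    using Cons.IH[OF f(3)] wt_edge_torus_map[OF \<phi> f(1) t]
    by (simp add: regauged_wt_gauge[OF \<phi> graph_aut_oedges[OF \<phi> f(1)]]
        graph_aut_osrc[OF \<phi> f(1)] graph_aut_otgt[OF \<phi> f(1)] f(2) mult_ac)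
  then show ?case using gauge_phase_mult_cnj[OF t, of \<phi> "fst \<phi> (otgt ends f)"] by (simp add: mult_ac)
qed

lemma torus_map_aut_comp:
  assumes \<phi>1: "graph_aut V E ends \<phi>1" and \<phi>2: "graph_aut V E ends \<phi>2" and t: "t \<in> S"
  shows "torus_map (aut_comp \<phi>1 \<phi>2) t = torus_map \<phi>2 (torus_map \<phi>1 t)"
proof (rule ext)
  fix e
  show "torus_map (aut_comp \<phi>1 \<phi>2) t e = torus_map \<phi>2 (torus_map \<phi>1 t) e"
  proof (cases "e \<in> E - \<tau>")
    case False
    then show ?thesis using t torus_map_in_torus[OF t] by (auto simp: torus_map_def)
  next
    case True
    define g where "g = snd \<phi>2 (e, True)"
    let ?\<phi> = "aut_comp \<phi>1 \<phi>2" and ?P = "tree_path ends (moved_tree \<phi>2)" and ?r = "fst \<phi>2 r"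
    have g: "g \<in> oedges E"
      unfolding g_def using True by (intro graph_aut_oedges[OF \<phi>2]) (simp add: oedges_iff)
    have ends_g: "osrc ends g \<in> V" "otgt ends g \<in> V"
      using osrc_in_vertices[OF finite_graph g] otgt_in_vertices[OF finite_graph g] .
    define W where "W = ?P ?r (osrc ends g) @ [g] @ ?P (otgt ends g) ?r"
    have "is_walk ends (moved_tree \<phi>2) ?r (osrc ends g) (?P ?r (osrc ends g))"
      "is_walk ends (moved_tree \<phi>2) (otgt ends g) ?r (?P (otgt ends g) ?r)"
      using is_walk_tree_path[OF spanning_moved_tree[OF \<phi>2]] moved_root[OF \<phi>2] ends_g by blast+
    then have W: "is_walk ends E ?r ?r W"
      using tree_image_subset[OF \<phi>2 tree_subset] g
      by (auto simp: W_def is_walk_append oedges_iff intro: is_walk_mono)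
    have "moved_tree ?\<phi> = tree_image (snd \<phi>1) (moved_tree \<phi>2)"
      using tree_image_aut_comp[OF \<phi>1 \<phi>2 tree_subset] by simp
    then have "map (snd \<phi>1) W = tree_path ends (moved_tree ?\<phi>) (fst ?\<phi> r) (osrc ends (snd \<phi>1 g))
        @ [snd \<phi>1 g] @ tree_path ends (moved_tree ?\<phi>) (otgt ends (snd \<phi>1 g)) (fst ?\<phi> r)"
      using tree_path_graph_aut[OF \<phi>1 finite_graph spanning_moved_tree[OF \<phi>2]] moved_root[OF \<phi>2] ends_g
      by (simp add: W_def aut_comp_def graph_aut_osrc[OF \<phi>1 g] graph_aut_otgt[OF \<phi>1 g])
    then have "wt_walk \<tau> (map (snd \<phi>1) W) t = rwt ?\<phi> (snd ?\<phi> (e, True)) t"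
      by (simp add: regauged_wt_loop aut_comp_def g_def)
    then have "torus_map \<phi>2 (torus_map \<phi>1 t) e
        = gauge_phase \<phi>1 t (fst \<phi>1 ?r) * cnj (gauge_phase \<phi>1 t (fst \<phi>1 ?r)) * rwt ?\<phi> (snd ?\<phi> (e, True)) t"
      using True torus_map_in_torus[OF t] wt_walk_torus_map[OF \<phi>1 t W]
      by (simp add: torus_map_def regauged_wt_loop W_def g_def mult_ac)
    also have "\<dots> = torus_map ?\<phi> t e"
      using True t by (simp add: gauge_phase_mult_cnj torus_map_def)
    finally show ?thesis ..
  qed
qed

lemma torus_map_identity:
  assumes "\<And>v. v \<in> V \<Longrightarrow> fst \<phi> v = v" "\<And>g. g \<in> oedges E \<Longrightarrow> snd \<phi> g = g" and t: "t \<in> S"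
  shows "torus_map \<phi> t = t"
proof (rule torus_eqI[OF torus_map_in_torus[OF t] t])
  fix e assume e: "e \<in> E - \<tau>"
  then have "(e, True) \<in> oedges E" by (simp add: oedges_iff)
  moreover have "moved_tree \<phi> = \<tau>" by (rule tree_image_id[OF assms(2) tree_subset])
  ultimately show "torus_map \<phi> t e = t e"
    using e t assms(1)[OF root] assms(2)
      wt_walk_tree_path_self[OF spanning_tree root osrc_in_vertices[OF finite_graph]]
      wt_walk_tree_path_self[OF spanning_tree otgt_in_vertices[OF finite_graph] root]
    by (simp add: torus_map_def regauged_wt_loop wt_edge_def)
qed

lemma homeomorphism_torus_map:
  assumes \<phi>: "graph_aut V E ends \<phi>"
  shows "homeomorphism S S (torus_map \<phi>) (torus_map (aut_inv V E \<phi>))"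
proof (rule homeomorphismI)
  note \<psi> = graph_aut_aut_inv[OF \<phi> finite_graph]
  show "torus_map (aut_inv V E \<phi>) (torus_map \<phi> t) = t" if "t \<in> S" for t
    using torus_map_aut_comp[OF \<phi> \<psi> that] torus_map_identity[OF aut_comp_aut_inv(1,2)[OF \<phi>] that]
    by simp
  show "torus_map \<phi> (torus_map (aut_inv V E \<phi>) t) = t" if "t \<in> S" for t
    using torus_map_aut_comp[OF \<psi> \<phi> that] torus_map_identity[OF aut_comp_aut_inv(3,4)[OF \<phi>] that]
    by simp
qed (auto simp: continuous_on_torus_map torus_map_in_torus)

section \<open>The *-automorphism of an automorphism\<close>

lemma pullback_wt_edge:
  assumes "graph_aut V E ends \<phi>" "f \<in> oedges E"
  shows "pullback S (torus_map \<phi>) (as_el S (wt_edge \<tau> f)) = as_el S (rwt \<phi> (snd \<phi> f))"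
  unfolding pullback_def as_el_def
  using wt_edge_torus_map[OF assms] torus_map_in_torus by (intro ext) simp

lemma pullback_aut_comp:
  assumes "graph_aut V E ends \<phi>1" "graph_aut V E ends \<phi>2"
  shows "pullback S (torus_map (aut_comp \<phi>1 \<phi>2)) F
       = pullback S (torus_map \<phi>1) (pullback S (torus_map \<phi>2) F)"
  by (rule pullback_pullback) (auto simp: torus_map_in_torus torus_map_aut_comp[OF assms])

lemma star_aut_unique:
  assumes \<phi>: "graph_aut V E ends \<phi>" and \<psi>: "star_aut S \<psi>"
    and gen: "\<And>f. f \<in> oedges E \<Longrightarrow> \<psi> (as_el S (wt_edge \<tau> f)) = as_el S (rwt \<phi> (snd \<phi> f))"
    and F: "F \<in> Cfun S"
  shows "\<psi> F = pullback S (torus_map \<phi>) F"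
proof
  fix t
  show "\<psi> F t = pullback S (torus_map \<phi>) F t"
  proof (cases "t \<in> S")
    case False
    then show ?thesis using Cfun_vanishes[OF star_aut_Cfun[OF \<psi> F]] by (simp add: pullback_def as_el_def)
  next
    case t: True
    have "\<psi> (as_el S (\<lambda>s. s e)) t = torus_map \<phi> t e" if e: "e \<in> E - \<tau>" for e
    proof -
      have "as_el S (\<lambda>s. s e) = as_el S (wt_edge \<tau> (e, True))"
        using e unfolding as_el_def wt_edge_def by (intro ext) simp
      then show ?thesis
        using gen[of "(e, True)"] e t by (simp add: oedges_iff as_el_def torus_map_def)
    qed
    moreover have "finite (E - \<tau>)" using finite_graph by (simp add: finite_graph_def)
    ultimately have "\<psi> F t = F (torus_map \<phi> t)"
      using torus_eqI[OF _ torus_map_in_torus[OF t]]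
      by (intro star_aut_eval_eq[OF \<psi> _ t torus_map_in_torus[OF t] _ _ F, of "E - \<tau>"]) blast+
    then show ?thesis using t by (simp add: pullback_def as_el_def)
  qed
qed

section \<open>Commutation with the Hamiltonian\<close>

lemma regauge_matrix_eq:
  assumes \<phi>: "graph_aut V E ends \<phi>" and us: "set us = V" "hd us = r" and m: "m < length us"
  shows "regauge_matrix ends \<tau> us \<phi> t l m
       = (if fst \<phi> (us ! l) = us ! m then cnj (gauge_phase \<phi> t (us ! m)) else 0)"
proof -
  have "us ! m \<in> V" using us(1) m by auto
  then show ?thesis
    using us(2) wt_walk_tree_path_self[OF spanning_tree root moved_root[OF \<phi>]]
      wt_walk_tree_path_self[OF spanning_tree _ root]
    by (simp add: regauge_matrix_def Let_def gauge_phase_def)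
qed

lemma wt_edge_fixed_point:
  assumes \<phi>: "graph_aut V E ends \<phi>" and t: "t \<in> S" "torus_map \<phi> t = t" and g: "g \<in> oedges E"
  shows "wt_edge \<tau> g t = gauge_phase \<phi> t (fst \<phi> (osrc ends g)) * wt_edge \<tau> (snd \<phi> g) t
      * cnj (gauge_phase \<phi> t (fst \<phi> (otgt ends g)))"
  using wt_edge_torus_map[OF \<phi> g t(1)] regauged_wt_gauge[OF \<phi> graph_aut_oedges[OF \<phi> g]]
  by (simp add: t(2) graph_aut_osrc[OF \<phi> g] graph_aut_otgt[OF \<phi> g])

lemma regauge_matrix_commutes:
  assumes \<phi>: "graph_aut V E ends \<phi>" and us: "distinct us" "set us = V" "hd us = r"
    and t: "t \<in> S" "torus_map \<phi> t = t"
  shows "mat_commute (length us) (regauge_matrix ends \<tau> us \<phi> t) (hamiltonian E ends \<tau> us t)"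
  unfolding mat_commute_def
proof (intro allI impI)
  fix i j assume i: "i < length us" and j: "j < length us"
  let ?M = "regauge_matrix ends \<tau> us \<phi> t" and ?H = "hamiltonian E ends \<tau> us t"
    and ?c = "gauge_phase \<phi> t"
  have nth_V: "us ! l \<in> V" if "l < length us" for l using that us(2) by auto
  obtain a where a: "a < length us" "us ! a = fst \<phi> (us ! i)"
    using graph_aut_vertex[OF \<phi> nth_V[OF i]] us(2) by (auto simp: in_set_conv_nth)
  obtain b where b: "b < length us" "fst \<phi> (us ! b) = us ! j"
    using bij_betw_imp_surj_on[OF graph_aut_bij_vertices[OF \<phi>]] nth_V[OF j] us(2)
    by (metis imageE in_set_conv_nth)
  have inj: "fst \<phi> (us ! l) = us ! j \<longleftrightarrow> us ! b = us ! l" if "l < length us" for l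
    using inj_onD[OF bij_betw_imp_inj_on[OF graph_aut_bij_vertices[OF \<phi>]] _ nth_V[OF that] nth_V[OF b(1)]] b(2)
    by auto
  have if_mult: "(if P then x else 0) * y = (if P then x * y else 0)"
    "y * (if P then x else 0) = (if P then y * x else 0)" for P and x y :: complex
    by simp_all
  define G where "G = {g \<in> oedges E. osrc ends g = us ! b \<and> otgt ends g = us ! i}"
  have "(\<Sum>l<length us. ?M i l * ?H l j) = cnj (?c (us ! a)) * ?H a j"
    using sum_nth_distinct_delta[OF us(1) a(1), of "\<lambda>l. cnj (?c (us ! l)) * ?H l j"]
    by (simp add: regauge_matrix_eq[OF \<phi> us(2,3)] a(2) if_mult cong: if_cong)
  also have "?H a j = (\<Sum>g\<in>G. wt_edge \<tau> (snd \<phi> g) t)"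
    unfolding hamiltonian_def G_def a(2) b(2)[symmetric]
    by (rule sum_oedges_between_graph_aut[OF \<phi> finite_graph nth_V[OF b(1)] nth_V[OF i]])
  also have "cnj (?c (us ! a)) * (\<Sum>g\<in>G. wt_edge \<tau> (snd \<phi> g) t) = ?H i b * cnj (?c (us ! j))"
  proof -
    have "wt_edge \<tau> g t * cnj (?c (us ! j)) = cnj (?c (us ! a)) * wt_edge \<tau> (snd \<phi> g) t" if "g \<in> G" for g
      using that wt_edge_fixed_point[OF \<phi> t] gauge_phase_mult_cnj[OF t(1), of \<phi> "us ! j"]
      by (auto simp: G_def a(2) b(2) mult_ac)
    then show ?thesis by (simp add: hamiltonian_def G_def sum_distrib_left sum_distrib_right)
  qed
  also have "?H i b * cnj (?c (us ! j)) = (\<Sum>l<length us. ?H i l * ?M l j)"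
    using sum_nth_distinct_delta[OF us(1) b(1), of "\<lambda>l. ?H i l * cnj (?c (us ! j))"]
    by (simp add: regauge_matrix_eq[OF \<phi> us(2,3) j] inj if_mult cong: if_cong)
  finally show "(\<Sum>l<length us. ?M i l * ?H l j) = (\<Sum>l<length us. ?H i l * ?M l j)" .
qed

end

theorem mainTheorem4:
  fixes V :: "'v set" and E :: "'e set" and ends :: "'e \<Rightarrow> 'v \<times> 'v"
    and \<tau> :: "'e set" and us :: "'v list"
  assumes "connected_graph V E ends"
    and "spanning_tree V E ends \<tau>"
    and "distinct us" and "set us = V"
  shows "\<exists>\<Psi> h.
    (\<forall>\<phi>. graph_aut V E ends \<phi> \<longrightarrow>
       star_aut (torus E \<tau>) (\<Psi> \<phi>) \<and>
       (\<forall>f\<in>oedges E. \<Psi> \<phi> (as_el (torus E \<tau>) (wt_edge \<tau> f))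
                      = as_el (torus E \<tau>) (regauged_wt ends \<tau> (hd us) \<phi> (snd \<phi> f))) \<and>
       (\<forall>\<psi>. star_aut (torus E \<tau>) \<psi> \<and>
            (\<forall>f\<in>oedges E. \<psi> (as_el (torus E \<tau>) (wt_edge \<tau> f))
                           = as_el (torus E \<tau>) (regauged_wt ends \<tau> (hd us) \<phi> (snd \<phi> f)))
            \<longrightarrow> (\<forall>F\<in>Cfun (torus E \<tau>). \<psi> F = \<Psi> \<phi> F)) \<and>
       (\<exists>g. homeomorphism (torus E \<tau>) (torus E \<tau>) (h \<phi>) g) \<and>
       (\<forall>F\<in>Cfun (torus E \<tau>). \<Psi> \<phi> F = as_el (torus E \<tau>) (F \<circ> h \<phi>)) \<and>
       (\<forall>t\<in>torus E \<tau>. h \<phi> t = t \<longrightarrow>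
          mat_commute (length us) (regauge_matrix ends \<tau> us \<phi> t) (hamiltonian E ends \<tau> us t))) \<and>
    (\<forall>\<phi>1 \<phi>2. graph_aut V E ends \<phi>1 \<and> graph_aut V E ends \<phi>2 \<longrightarrow>
       (\<forall>F\<in>Cfun (torus E \<tau>). \<Psi> (aut_comp \<phi>1 \<phi>2) F = \<Psi> \<phi>1 (\<Psi> \<phi>2 F)))"
proof -
  have "us \<noteq> []" using assms(1,4) by (auto simp: connected_graph_def)
  then interpret rooted_spanning_tree V E ends \<tau> "hd us"
    using assms by unfold_locales (auto simp: connected_graph_def)
  show ?thesis
  proof (intro exI[of _ "\<lambda>\<phi>. pullback S (torus_map \<phi>)"] exI[of _ torus_map] conjI allI impI ballI)
    fix \<phi> assume \<phi>: "graph_aut V E ends \<phi>"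
    show "star_aut S (pullback S (torus_map \<phi>))"
      using star_aut_pullback[OF homeomorphism_torus_map[OF \<phi>]] .
    show "pullback S (torus_map \<phi>) (as_el S (wt_edge \<tau> f)) = as_el S (rwt \<phi> (snd \<phi> f))"
      if "f \<in> oedges E" for f
      using pullback_wt_edge[OF \<phi> that] .
    show "\<psi> F = pullback S (torus_map \<phi>) F"
      if "star_aut S \<psi> \<and> (\<forall>f\<in>oedges E. \<psi> (as_el S (wt_edge \<tau> f)) = as_el S (rwt \<phi> (snd \<phi> f)))"
        and "F \<in> Cfun S" for \<psi> F
      using star_aut_unique[OF \<phi> _ _ \<open>F \<in> Cfun S\<close>] that(1) by blast
    show "\<exists>g. homeomorphism S S (torus_map \<phi>) g"
      using homeomorphism_torus_map[OF \<phi>] by blast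
    show "pullback S (torus_map \<phi>) F = as_el S (F \<circ> torus_map \<phi>)" for F
      by (simp add: pullback_def)
    show "mat_commute (length us) (regauge_matrix ends \<tau> us \<phi> t) (hamiltonian E ends \<tau> us t)"
      if "t \<in> S" "torus_map \<phi> t = t" for t
      using regauge_matrix_commutes[OF \<phi> assms(3,4) refl that] .
  next
    fix \<phi>1 \<phi>2 F assume "graph_aut V E ends \<phi>1 \<and> graph_aut V E ends \<phi>2"
    then show "pullback S (torus_map (aut_comp \<phi>1 \<phi>2)) F
        = pullback S (torus_map \<phi>1) (pullback S (torus_map \<phi>2) F)"
      using pullback_aut_comp by blast
  qed
qed

end
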